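(* The entropy-distortion function of the sawbridge satisfies $$\lim_{\Delta\to 0^+}\left| H(\Delta) - \log\frac{1}{6\Delta}\right| = 0.$$
   Context: Let $U$ be uniformly distributed on $[0,1]$. The sawbridge is the random process $X(t) = t - \mathbf{1}(t\ge U)$, $t\in[0,1]$, viewed as a random element of $L^2[0,1]$. An encoder is a (measurable) map $f:L^2[0,1]\to\mathbb{N}$, with entropy $H(f) = -\sum_{i} P(f(X)=i)\log P(f(X)=i)$ and distortion $D(f) = E\big[\int_0^1 (X(t)-E[X(t)\mid f(X)])^2\,dt\big]$. Logarithms are base 2. The entropy-distortion function is $H(\Delta) = \inf\{H(f): D(f)\le\Delta\}$. *)

theory Defs
  imports "HOL-Analysis.Analysis"
begin

text \<open>Sample path of the sawbridge for the value U = u: X(t) = t - 1(t \<ge> u).\<close>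
definition saw :: "real \<Rightarrow> real \<Rightarrow> real" where
  "saw u t = t - (if t \<ge> u then 1 else 0)"

text \<open>An encoder maps sample paths to natural numbers; it must be measurable
  as a function of the sawbridge, i.e. u \<mapsto> f (saw u) is Borel measurable on [0,1]
  (U uniform on [0,1]).\<close>
definition encoder :: "((real \<Rightarrow> real) \<Rightarrow> nat) \<Rightarrow> bool" where
  "encoder f \<longleftrightarrow>
     (\<lambda>u. f (saw u)) \<in> measurable (restrict_space borel {0..1}) (count_space UNIV)"

text \<open>P(f(X) = i), with U uniform on [0,1].\<close>
definition cell_prob :: "((real \<Rightarrow> real) \<Rightarrow> nat) \<Rightarrow> nat \<Rightarrow> real" where
  "cell_prob f i = measure lborel {u \<in> {0..1}. f (saw u) = i}"

text \<open>E[X(t) | f(X) = i] (irrelevant on null cells).\<close>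
definition cond_mean :: "((real \<Rightarrow> real) \<Rightarrow> nat) \<Rightarrow> nat \<Rightarrow> real \<Rightarrow> real" where
  "cond_mean f i t =
     (LINT u : {u \<in> {0..1}. f (saw u) = i} | lborel. saw u t) / cell_prob f i"

definition entropy :: "((real \<Rightarrow> real) \<Rightarrow> nat) \<Rightarrow> ereal" where
  "entropy f = (\<Sum>i. ereal (if cell_prob f i = 0 then 0
                              else - cell_prob f i * log 2 (cell_prob f i)))"

definition distortion :: "((real \<Rightarrow> real) \<Rightarrow> nat) \<Rightarrow> real" where
  "distortion f =
     (LINT u : {0..1} | lborel.
        (LINT t : {0..1} | lborel. (saw u t - cond_mean f (f (saw u)) t)\<^sup>2))"

definition entropy_distortion :: "real \<Rightarrow> ereal" where
  "entropy_distortion \<Delta> = (INF f \<in> {f. encoder f \<and> distortion f \<le> \<Delta>}. entropy f)"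

end

theory Submission
  imports Defs
begin

(*
  Write A_i = {u in [0,1]. f (saw u) = i} for the cells of an encoder f, p_i for their
  probabilities and G_i t = |A_i \<inter> {..t}|. Given f X = i, the conditional mean of X t is
  t - G_i t / p_i, so by Fubini the cell contributes (1/p_i) * integral_0^1 G_i (p_i - G_i) to
  the distortion. Since G_i maps Lebesgue measure on A_i to Lebesgue measure on [0, p_i], this
  is at least p_i^2 / 6, with equality for interval cells. Hence D f >= (sum_i p_i^2) / 6, and
  as Shannon entropy dominates collision entropy, H f >= - log (sum_i p_i^2) >= log (1 / (6 D)).
  Conversely, reporting which of n = ceiling (1 / (6 D)) equal intervals contains U has
  distortion 1 / (6 n) <= D and entropy log n < log (1 / (6 D) + 1). Thus
  0 <= H D - log (1 / (6 D)) <= log (1 + 6 D).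
*)

lemma log_le_tangent:
  fixes p s :: real
  assumes "0 < p" "0 < s"
  shows "log 2 p \<le> log 2 s + (p - s) / (s * ln 2)"
proof -
  have "ln (p / s) \<le> p / s - 1" using assms by (intro ln_le_minus_one) simp
  hence "ln p - ln s \<le> (p - s) / s" using assms by (simp add: ln_div field_simps)
  hence "(ln p - ln s) / ln 2 \<le> ((p - s) / s) / ln 2" by (rule divide_right_mono) simp
  thus ?thesis using assms by (simp add: log_def diff_divide_distrib)
qed

lemma entropy_term_ge_tangent:
  fixes p s :: real
  assumes "0 \<le> p" "0 < s"
  shows "- p * log 2 s - p * (p - s) / (s * ln 2) \<le> (if p = 0 then 0 else - p * log 2 p)"
proof (cases "p = 0")
  case False
  with assms have "p * log 2 p \<le> p * (log 2 s + (p - s) / (s * ln 2))"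
    using log_le_tangent by (intro mult_left_mono) auto
  with False show ?thesis by (simp add: algebra_simps)
qed simp

text \<open>Sum the tangent bounds at \<open>s\<close>: their linear parts cancel because \<open>\<Sum>i. p i = 1\<close>.\<close>
lemma entropy_ge_collision_entropy:
  fixes p :: "nat \<Rightarrow> real"
  assumes nonneg: "\<And>i. 0 \<le> p i" and le_one: "\<And>i. p i \<le> 1" and sums_one: "p sums 1"
    and squares: "(\<lambda>i. (p i)\<^sup>2) sums s" and "0 < s"
  shows "ereal (- log 2 s) \<le> (\<Sum>i. ereal (if p i = 0 then 0 else - p i * log 2 (p i)))"
proof -
  define b where "b i = - p i * log 2 s - p i * (p i - s) / (s * ln 2)" for i
  define e where "e i = (if p i = 0 then 0 else - p i * log 2 (p i))" for i
  have "(\<lambda>i. (- log 2 s) * p i - ((p i)\<^sup>2 - s * p i) / (s * ln 2))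
          sums ((- log 2 s) * 1 - (s - s * 1) / (s * ln 2))"
    by (intro sums_diff sums_mult sums_divide squares sums_one)
  moreover have "(\<lambda>i. (- log 2 s) * p i - ((p i)\<^sup>2 - s * p i) / (s * ln 2)) = b"
    unfolding b_def by (auto simp: fun_eq_iff power2_eq_square algebra_simps diff_divide_distrib)
  ultimately have "b sums (- log 2 s)" by simp
  then have lim: "(\<lambda>n. ereal (\<Sum>i<n. b i)) \<longlonglongrightarrow> ereal (- log 2 s)"
    unfolding sums_def by (rule tendsto_ereal)
  have e_nonneg: "0 \<le> e i" for i
  proof (cases "p i = 0")
    case False
    with nonneg[of i] le_one[of i] have "log 2 (p i) \<le> 0" by simp
    with nonneg[of i] show ?thesis by (simp add: e_def mult_nonneg_nonpos)
  qed (simp add: e_def)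
  have "ereal (\<Sum>i<n. b i) \<le> (\<Sum>i. ereal (e i))" for n
  proof -
    have "ereal (\<Sum>i<n. b i) \<le> (\<Sum>i<n. ereal (e i))"
      unfolding sum_ereal using entropy_term_ge_tangent[OF nonneg \<open>0 < s\<close>]
      by (intro ereal_less_eq(3)[THEN iffD2] sum_mono) (simp add: b_def e_def)
    also have "\<dots> \<le> (\<Sum>i. ereal (e i))"
      by (intro suminf_upper) (use e_nonneg in simp)
    finally show ?thesis .
  qed
  then show ?thesis unfolding e_def by (intro LIMSEQ_le_const2[OF lim]) blast
qed

lemma entropy_ge_neg_log_sum_squares:
  fixes p :: "nat \<Rightarrow> real"
  assumes nonneg: "\<And>i. 0 \<le> p i" and sums_one: "p sums 1"
    and bound: "\<And>n. (\<Sum>i<n. (p i)\<^sup>2) \<le> c"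
  shows "ereal (- log 2 c) \<le> (\<Sum>i. ereal (if p i = 0 then 0 else - p i * log 2 (p i)))"
proof -
  have summable_p: "summable p" using sums_one by (simp add: sums_iff)
  have le_one: "p i \<le> 1" for i
    using sum_le_suminf[OF summable_p, of "{i}"] nonneg sums_one by (simp add: sums_iff)
  have "norm ((p i)\<^sup>2) \<le> p i" for i
    using nonneg[of i] le_one[of i] by (simp add: power2_eq_square mult_left_le)
  then have "summable (\<lambda>i. (p i)\<^sup>2)"
    by (intro summable_comparison_test[OF _ summable_p]) blast
  then have squares: "(\<lambda>i. (p i)\<^sup>2) sums (\<Sum>i. (p i)\<^sup>2)" by (rule summable_sums)
  have "(\<Sum>i. (p i)\<^sup>2) \<noteq> 0"
  proof
    assume "(\<Sum>i. (p i)\<^sup>2) = 0"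
    then have "\<forall>i. (p i)\<^sup>2 = 0" using squares by (subst (asm) suminf_eq_zero_iff) (auto simp: sums_iff)
    then have "p = (\<lambda>_. 0)" by auto
    with sums_one show False using sums_zero sums_unique2 by fastforce
  qed
  moreover have "0 \<le> (\<Sum>i. (p i)\<^sup>2)" using squares by (intro suminf_nonneg) (auto simp: sums_iff)
  ultimately have "0 < (\<Sum>i. (p i)\<^sup>2)" by simp
  moreover have "(\<Sum>i. (p i)\<^sup>2) \<le> c"
    using squares bound by (intro suminf_le_const) (auto simp: sums_iff)
  ultimately have "ereal (- log 2 c) \<le> ereal (- log 2 (\<Sum>i. (p i)\<^sup>2))" by simp
  also have "\<dots> \<le> (\<Sum>i. ereal (if p i = 0 then 0 else - p i * log 2 (p i)))"
    using nonneg le_one sums_one squares \<open>0 < (\<Sum>i. (p i)\<^sup>2)\<close>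
    by (rule entropy_ge_collision_entropy)
  finally show ?thesis .
qed

definition cum_measure :: "real set \<Rightarrow> real \<Rightarrow> real" where
  "cum_measure A t = measure lborel (A \<inter> {..t})"

locale unit_interval_set =
  fixes A :: "real set"
  assumes sets_A [measurable]: "A \<in> sets borel" and A_subset: "A \<subseteq> {0..1}"
begin

lemma emeasure_A_finite: "emeasure lborel A < \<infinity>"
proof -
  have "emeasure lborel A \<le> emeasure lborel {0..1::real}"
    using A_subset by (intro emeasure_mono) auto
  then show ?thesis by (simp add: order_le_less_trans)
qed

lemma fmeasurable_A: "A \<in> fmeasurable lborel"
  using emeasure_A_finite by (intro fmeasurableI) auto

lemma fmeasurable_A_Int: "S \<in> sets borel \<Longrightarrow> A \<inter> S \<in> fmeasurable lborel"
  using fmeasurable_A by (intro fmeasurable_Int_fmeasurable) auto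

lemma cum_measure_diff:
  assumes "s \<le> t"
  shows "cum_measure A t - cum_measure A s = measure lborel (A \<inter> {s<..t})"
proof -
  have "A \<inter> {..t} = (A \<inter> {..s}) \<union> (A \<inter> {s<..t})" using assms by auto
  then have "cum_measure A t = cum_measure A s + measure lborel (A \<inter> {s<..t})"
    unfolding cum_measure_def
    by (subst measure_Union[symmetric])
       (use fmeasurable_A_Int[of "{..s}"] fmeasurable_A_Int[of "{s<..t}"] in
        \<open>auto simp: fmeasurable_def\<close>)
  then show ?thesis by simp
qed

lemma cum_measure_mono: "s \<le> t \<Longrightarrow> cum_measure A s \<le> cum_measure A t"
  using cum_measure_diff[of s t] measure_nonneg[of lborel "A \<inter> {s<..t}"] by linarith

lemma cum_measure_increment_le:
  assumes "s \<le> t"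
  shows "cum_measure A t - cum_measure A s \<le> t - s"
proof -
  have "measure lborel (A \<inter> {s<..t}) \<le> measure lborel {s..t}"
    by (intro measure_mono_fmeasurable fmeasurable_compact) auto
  with assms show ?thesis by (simp add: cum_measure_diff)
qed

lemma continuous_on_cum_measure: "continuous_on S (cum_measure A)"
proof (rule lipschitz_on_continuous_on)
  have "dist (cum_measure A s) (cum_measure A t) \<le> 1 * dist s t" for s t
    using cum_measure_increment_le[of s t] cum_measure_increment_le[of t s]
      cum_measure_mono[of s t] cum_measure_mono[of t s]
    by (cases "s \<le> t") (auto simp: dist_real_def)
  then show "1-lipschitz_on S (cum_measure A)" by (auto simp: lipschitz_on_def)
qed

lemma borel_measurable_cum_measure [measurable]: "cum_measure A \<in> borel_measurable borel"
  using continuous_on_cum_measure[of UNIV] by (simp add: borel_measurable_continuous_onI)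

lemma cum_measure_nonneg: "0 \<le> cum_measure A t"
  unfolding cum_measure_def by simp

lemma cum_measure_le_measure: "cum_measure A t \<le> measure lborel A"
  unfolding cum_measure_def using fmeasurable_A by (intro measure_mono_fmeasurable) auto

lemma cum_measure_nonpos:
  assumes "t \<le> 0"
  shows "cum_measure A t = 0"
proof -
  have "measure lborel (A \<inter> {..t}) \<le> measure lborel {0::real}"
    using A_subset assms by (intro measure_mono_fmeasurable) (auto simp: fmeasurable_def)
  then show ?thesis unfolding cum_measure_def by (simp add: antisym)
qed

lemma cum_measure_ge_one:
  assumes "1 \<le> t"
  shows "cum_measure A t = measure lborel A"
proof -
  have "A \<inter> {..t} = A" using A_subset assms by auto
  then show ?thesis unfolding cum_measure_def by simp
qed

lemma cum_measure_level_set: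
  assumes "0 \<le> x" "x < measure lborel A"
  obtains s where "cum_measure A s = x" "\<And>t. x < cum_measure A t \<longleftrightarrow> s < t"
proof -
  define S where "S = {0..1} \<inter> cum_measure A -` {..x}"
  have "closed S" unfolding S_def
    by (intro continuous_closed_preimage continuous_on_cum_measure) auto
  moreover have "0 \<in> S" unfolding S_def using assms cum_measure_nonpos[of 0] by auto
  moreover have bdd: "bdd_above S" unfolding S_def by (auto intro: bdd_aboveI[of _ 1])
  ultimately have "Sup S \<in> S" using closed_contains_Sup by blast
  then have "cum_measure A (Sup S) \<le> x" and Sup_nonneg: "0 \<le> Sup S" unfolding S_def by auto
  obtain c where c: "0 \<le> c" "c \<le> 1" "cum_measure A c = x"
    using IVT'[of "cum_measure A" 0 x 1] cum_measure_nonpos[of 0] cum_measure_ge_one[of 1] assms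
      continuous_on_cum_measure by force
  then have "c \<in> S" unfolding S_def by auto
  then have "cum_measure A c \<le> cum_measure A (Sup S)" by (intro cum_measure_mono cSup_upper bdd)
  with c \<open>cum_measure A (Sup S) \<le> x\<close> have level: "cum_measure A (Sup S) = x" by simp
  have "x < cum_measure A t \<longleftrightarrow> Sup S < t" for t
  proof
    assume "x < cum_measure A t"
    then show "Sup S < t" using cum_measure_mono[of t "Sup S"] level by fastforce
  next
    assume less: "Sup S < t"
    show "x < cum_measure A t"
    proof (cases "t \<le> 1")
      case True
      have "t \<notin> S" using less cSup_upper[OF _ bdd] by force
      with True less Sup_nonneg show ?thesis unfolding S_def by auto
    qed (use cum_measure_ge_one[of t] assms in simp)
  qed
  with level show thesis by (rule that)
qed

lemma emeasure_cum_measure_greater: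
  "emeasure lborel (A \<inter> cum_measure A -` {x<..})
     = emeasure lborel ({0..measure lborel A} \<inter> {x<..})"
proof -
  define p where "p = measure lborel A"
  have p_nonneg: "0 \<le> p" unfolding p_def by simp
  have "emeasure lborel A = ennreal p"
    unfolding p_def using emeasure_A_finite by (simp add: emeasure_eq_ennreal_measure less_top)
  consider "x < 0" | "p \<le> x" | "0 \<le> x" "x < p" by linarith
  then show ?thesis
  proof cases
    case 1
    then have "x < cum_measure A t" for t
      using cum_measure_nonneg[of t] by linarith
    then have "A \<inter> cum_measure A -` {x<..} = A" by (simp add: set_eq_iff)
    then have "emeasure lborel (A \<inter> cum_measure A -` {x<..}) = emeasure lborel A" by simp
    also have "\<dots> = ennreal p" by fact
    also have "\<dots> = emeasure lborel ({0..p} \<inter> {x<..})"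
      using 1 p_nonneg by (simp add: Int_absorb2 subset_eq)
    finally show ?thesis unfolding p_def .
  next
    case 2
    then have "\<not> x < cum_measure A t" for t
      using cum_measure_le_measure[of t] unfolding p_def by linarith
    then have "A \<inter> cum_measure A -` {x<..} = {}" by (simp add: set_eq_iff)
    moreover have "{0..p} \<inter> {x<..} = {}" using 2 by auto
    ultimately show ?thesis unfolding p_def[symmetric] by simp
  next
    case 3
    then have "0 \<le> x" "x < measure lborel A" unfolding p_def by auto
    then obtain s where s: "cum_measure A s = x" "\<And>t. x < cum_measure A t \<longleftrightarrow> s < t"
      by (rule cum_measure_level_set) blast
    have "A \<inter> cum_measure A -` {x<..} = A - (A \<inter> {..s})"
      using s(2) by (simp add: set_eq_iff not_le) blast
    moreover have "measure lborel (A - (A \<inter> {..s})) = p - x"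
      unfolding p_def s(1)[symmetric] cum_measure_def
      by (rule measure_Diff) (use emeasure_A_finite in auto)
    ultimately have "emeasure lborel (A \<inter> cum_measure A -` {x<..}) = ennreal (p - x)"
      using emeasure_eq_measure2[OF fmeasurable_Diff[OF fmeasurable_A], of "A \<inter> {..s}"] by simp
    moreover have "{0..p} \<inter> {x<..} = {x<..p}" using 3 by auto
    ultimately show ?thesis using 3 unfolding p_def[symmetric] by simp
  qed
qed

lemma distr_cum_measure:
  "distr (density lborel (indicator A)) borel (cum_measure A)
     = density lborel (indicator {0..measure lborel A})"
  (is "?L = ?R")
proof (rule measure_eqI_lessThan)
  show "sets ?L = sets borel" "sets ?R = sets borel" by auto
  have L: "emeasure ?L {x<..} = emeasure lborel (A \<inter> cum_measure A -` {x<..})" for x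
    using measurable_sets_borel[OF borel_measurable_cum_measure, of "{x<..}"]
    by (subst emeasure_distr) (auto simp: emeasure_restricted)
  show "emeasure ?L {x<..} < \<infinity>" for x
  proof -
    have "emeasure lborel (A \<inter> cum_measure A -` {x<..}) \<le> emeasure lborel A"
      by (intro emeasure_mono) auto
    with emeasure_A_finite show ?thesis unfolding L by (simp add: order_le_less_trans)
  qed
  show "emeasure ?L {x<..} = emeasure ?R {x<..}" for x
    unfolding L emeasure_cum_measure_greater by (simp add: emeasure_restricted)
qed

lemma set_integral_cum_measure_product:
  "(LINT t:A|lborel. cum_measure A t * (measure lborel A - cum_measure A t))
     = (measure lborel A)^3 / 6"
proof -
  define p where "p = measure lborel A"
  have "0 \<le> p" unfolding p_def by simp
  let ?\<phi> = "\<lambda>x::real. x * (p - x)"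
  have "(LINT t:A|lborel. ?\<phi> (cum_measure A t))
          = integral\<^sup>L (density lborel (\<lambda>x. ennreal (indicator A x))) (\<lambda>t. ?\<phi> (cum_measure A t))"
    by (subst integral_density) (auto simp: set_lebesgue_integral_def)
  also have "\<dots> = integral\<^sup>L (distr (density lborel (indicator A)) borel (cum_measure A)) ?\<phi>"
    by (subst integral_distr) (auto simp: ennreal_indicator)
  also have "\<dots> = integral\<^sup>L (density lborel (\<lambda>x. ennreal (indicator {0..p} x))) ?\<phi>"
    unfolding distr_cum_measure p_def by (simp add: ennreal_indicator)
  also have "\<dots> = (LBINT x. indicator {0..p} x *\<^sub>R ?\<phi> x)"
    by (subst integral_density) auto
  also have "\<dots> = (p * p^2/2 - p^3/3) - (p * 0^2/2 - 0^3/3)"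
    by (rule integral_FTC_atLeastAtMost[where F="\<lambda>x. p * x^2/2 - x^3/3"])
       (use \<open>0 \<le> p\<close> in \<open>auto intro!: derivative_eq_intros continuous_intros
         simp: has_real_derivative_iff_has_vector_derivative[symmetric] algebra_simps power2_eq_square\<close>)
  also have "\<dots> = p^3/6" by (simp add: power2_eq_square power3_eq_cube field_simps)
  finally show ?thesis unfolding p_def .
qed

lemma integral_cum_measure_product:
  "(LINT t:{0..1}|lborel. cum_measure A t * (measure lborel A - cum_measure A t))
     = (measure lborel A)^3 / 6
       + (LINT t:{0..1} - A|lborel. cum_measure A t * (measure lborel A - cum_measure A t))"
proof -
  let ?g = "\<lambda>t. cum_measure A t * (measure lborel A - cum_measure A t)"
  have "set_integrable lborel {0..1::real} ?g"
    by (intro borel_integrable_atLeastAtMost' continuous_intros continuous_on_cum_measure)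
  then have integrable: "set_integrable lborel S ?g" if "S \<in> sets borel" "S \<subseteq> {0..1}" for S
    using that by (metis set_integrable_subset sets_lborel)
  have "{0..1} = A \<union> ({0..1} - A)" using A_subset by auto
  then have "(LINT t:{0..1}|lborel. ?g t) = (LINT t:A \<union> ({0..1} - A)|lborel. ?g t)" by simp
  also have "\<dots> = (LINT t:A|lborel. ?g t) + (LINT t:{0..1} - A|lborel. ?g t)"
    using A_subset by (intro set_integral_Un integrable) auto
  finally have "(LINT t:{0..1}|lborel. ?g t)
                  = (LINT t:A|lborel. ?g t) + (LINT t:{0..1} - A|lborel. ?g t)" .
  then show ?thesis by (simp add: set_integral_cum_measure_product)
qed

lemma set_integrable_indicator_atMost: "set_integrable lborel A (\<lambda>u. indicator {..t} u :: real)"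
  using fmeasurable_A_Int[of "{..t}"]
  by (simp add: set_integrable_def indicator_inter_arith[symmetric] integrable_real_indicator
      fmeasurable_def)

lemma set_integral_indicator_atMost: "(LINT u:A|lborel. indicator {..t} u) = cum_measure A t"
  by (simp add: cum_measure_def set_lebesgue_integral_def indicator_inter_arith[symmetric]
      mult.commute)

lemma set_integral_saw: "(LINT u:A|lborel. saw u t) = t * measure lborel A - cum_measure A t"
proof -
  have "(LINT u:A|lborel. saw u t) = (LINT u:A|lborel. t - indicator {..t} u)"
    by (intro set_lebesgue_integral_cong) (auto simp: saw_def indicator_def)
  also have "\<dots> = (LINT u:A|lborel. t) - (LINT u:A|lborel. indicator {..t} u)"
    using emeasure_A_finite set_integrable_indicator_atMost
    by (intro set_integral_diff) (auto simp: set_integrable_def integrable_real_indicator)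
  also have "\<dots> = t * measure lborel A - cum_measure A t"
    using emeasure_A_finite by (simp add: set_integral_const set_integral_indicator_atMost)
  finally show ?thesis .
qed

lemma set_integral_squared_jump:
  "(LINT u:A|lborel. (c - (if u \<le> t then 1 else 0))\<^sup>2)
     = c\<^sup>2 * measure lborel A + (1 - 2 * c) * cum_measure A t"
proof -
  have "(c - (if u \<le> t then 1 else 0))\<^sup>2 = c\<^sup>2 + (1 - 2 * c) * indicator {..t} u" for u
    by (simp add: indicator_def power2_eq_square algebra_simps)
  then have "(LINT u:A|lborel. (c - (if u \<le> t then 1 else 0))\<^sup>2)
               = (LINT u:A|lborel. c\<^sup>2 + (1 - 2 * c) * indicator {..t} u)"
    by simp
  also have "\<dots> = (LINT u:A|lborel. c\<^sup>2) + (LINT u:A|lborel. (1 - 2 * c) * indicator {..t} u)"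
    using emeasure_A_finite set_integrable_indicator_atMost
    by (intro set_integral_add set_integrable_mult_right)
       (auto simp: set_integrable_def integrable_real_indicator)
  finally show ?thesis
    using emeasure_A_finite
    by (simp add: set_integral_const set_integral_mult_right set_integral_indicator_atMost)
qed

lemma integral_squared_deviation:
  assumes "0 < measure lborel A"
  shows "(LINT u:A|lborel. LINT t:{0..1}|lborel.
            (saw u t - (t - cum_measure A t / measure lborel A))\<^sup>2)
         = (LINT t:{0..1}|lborel. cum_measure A t * (measure lborel A - cum_measure A t))
             / measure lborel A"
proof -
  define p where "p = measure lborel A"
  have "0 < p" using assms unfolding p_def .
  define c where "c t = cum_measure A t / p" for t
  define f where "f u t = indicator A u * (indicator {0..1} t * (c t - (if u \<le> t then 1 else 0))\<^sup>2)"
    for u t :: real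
  have deviation: "saw u t - (t - c t) = c t - (if u \<le> t then 1 else 0)" for u t
    by (simp add: saw_def)
  have lhs: "(LINT u:A|lborel. LINT t:{0..1}|lborel. (saw u t - (t - c t))\<^sup>2)
               = (LBINT u. LBINT t. f u t)"
    unfolding set_lebesgue_integral_def f_def deviation by simp
  have "integrable (lborel \<Otimes>\<^sub>M lborel) (\<lambda>(u, t). f u t)"
  proof (rule Bochner_Integration.integrable_bound)
    have "emeasure (lborel \<Otimes>\<^sub>M lborel) (A \<times> {0..1::real}) = emeasure lborel A"
      by (subst lborel.emeasure_pair_measure_Times) auto
    with emeasure_A_finite
    show "integrable (lborel \<Otimes>\<^sub>M lborel) (indicator (A \<times> {0..1::real}) :: _ \<Rightarrow> real)"
      by (intro integrable_real_indicator) auto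
    show "(\<lambda>(u, t). f u t) \<in> borel_measurable (lborel \<Otimes>\<^sub>M lborel)"
      unfolding f_def c_def by measurable
    have "0 \<le> c t" "c t \<le> 1" for t
      using cum_measure_nonneg[of t] cum_measure_le_measure[of t] \<open>0 < p\<close>
      unfolding c_def p_def by auto
    then have "(c t - (if u \<le> t then 1 else 0))\<^sup>2 \<le> (1::real)" for u t
      by (auto simp: abs_square_le_1)
    then show "AE x in lborel \<Otimes>\<^sub>M lborel.
        norm ((\<lambda>(u, t). f u t) x) \<le> norm (indicator (A \<times> {0..1::real}) x :: real)"
      by (intro AE_I2) (auto simp: f_def indicator_def)
  qed
  then have "(LBINT u. LBINT t. f u t) = (LBINT t. LBINT u. f u t)"
    by (subst lborel_pair.Fubini_integral) simp_all
  also have "\<dots> = (LBINT t. indicator {0..1} t * (cum_measure A t * (p - cum_measure A t)) / p)"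
  proof -
    have "(LBINT u. f u t)
            = indicator {0..1} t * ((c t)\<^sup>2 * p + (1 - 2 * c t) * cum_measure A t)" for t
      using set_integral_squared_jump[of "c t" t]
      unfolding f_def p_def set_lebesgue_integral_def by (subst mult.left_commute) simp
    also have "\<dots>t = indicator {0..1} t * (cum_measure A t * (p - cum_measure A t)) / p" for t
      using \<open>0 < p\<close> by (simp add: c_def field_simps power2_eq_square)
    finally show ?thesis by simp
  qed
  also have "\<dots> = (LINT t:{0..1}|lborel. cum_measure A t * (p - cum_measure A t)) / p"
    unfolding set_lebesgue_integral_def by simp
  finally show ?thesis using lhs unfolding c_def p_def by simp
qed

lemma measure_eq_interval:
  assumes "a \<le> b" "{a<..b} \<subseteq> A" "A \<subseteq> {a..b}"
  shows "measure lborel A = b - a"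
proof -
  have "measure lborel {a<..b} \<le> measure lborel A"
    using assms fmeasurable_A by (intro measure_mono_fmeasurable) auto
  moreover have "measure lborel A \<le> measure lborel {a..b}"
    using assms by (intro measure_mono_fmeasurable fmeasurable_compact) auto
  ultimately show ?thesis using \<open>a \<le> b\<close> by simp
qed

lemma integral_cum_measure_product_interval:
  assumes "a \<le> b" "{a<..b} \<subseteq> A" "A \<subseteq> {a..b}"
  shows "(LINT t:{0..1}|lborel. cum_measure A t * (measure lborel A - cum_measure A t))
           = (b - a)^3 / 6"
proof -
  have vanishes: "cum_measure A t * (measure lborel A - cum_measure A t) = 0" if "t \<notin> A" for t
  proof (cases "t \<le> a")
    case True
    have "measure lborel (A \<inter> {..t}) \<le> measure lborel {a..t}"
      using assms by (intro measure_mono_fmeasurable fmeasurable_compact) auto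
    with True have "cum_measure A t \<le> 0" by (simp add: cum_measure_def split: if_splits)
    with cum_measure_nonneg[of t] show ?thesis by simp
  next
    case False
    with that assms(2) have "b < t" by (meson greaterThanAtMost_iff not_le subsetD)
    with assms have "A \<inter> {..t} = A" by auto
    then show ?thesis by (simp add: cum_measure_def)
  qed
  have "(\<lambda>t. indicator ({0..1} - A) t *\<^sub>R (cum_measure A t * (measure lborel A - cum_measure A t)))
          = (\<lambda>_. 0)"
  proof
    fix t show "indicator ({0..1} - A) t *\<^sub>R (cum_measure A t * (measure lborel A - cum_measure A t)) = 0"
      using vanishes[of t] by (cases "t \<in> A") auto
  qed
  then have "(LINT t:{0..1} - A|lborel. cum_measure A t * (measure lborel A - cum_measure A t)) = 0"
    by (simp add: set_lebesgue_integral_def)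
  then show ?thesis
    using integral_cum_measure_product measure_eq_interval[OF assms] by simp
qed

end

lemma borel_measurable_saw [measurable]: "(\<lambda>(u, t). saw u t) \<in> borel_measurable (borel \<Otimes>\<^sub>M borel)"
  unfolding saw_def by measurable

lemma saw_bounds: "t - 1 \<le> saw u t" "saw u t \<le> t"
  by (auto simp: saw_def)

definition cell :: "((real \<Rightarrow> real) \<Rightarrow> nat) \<Rightarrow> nat \<Rightarrow> real set" where
  "cell f i = {u \<in> {0..1}. f (saw u) = i}"

definition path_distortion :: "((real \<Rightarrow> real) \<Rightarrow> nat) \<Rightarrow> nat \<Rightarrow> real \<Rightarrow> real" where
  "path_distortion f i u = (LINT t:{0..1}|lborel. (saw u t - cond_mean f i t)\<^sup>2)"

definition cell_distortion :: "((real \<Rightarrow> real) \<Rightarrow> nat) \<Rightarrow> nat \<Rightarrow> real" where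
  "cell_distortion f i = (LINT u:cell f i|lborel. path_distortion f i u)"

lemma cell_subset: "cell f i \<subseteq> {0..1}"
  unfolding cell_def by auto

lemma cell_prob_eq_measure: "cell_prob f i = measure lborel (cell f i)"
  unfolding cell_prob_def cell_def ..

lemma distortion_eq_path_distortion:
  "distortion f = (LINT u:{0..1}|lborel. path_distortion f (f (saw u)) u)"
  unfolding distortion_def path_distortion_def ..

locale sawbridge_encoder =
  fixes f :: "(real \<Rightarrow> real) \<Rightarrow> nat"
  assumes encoder: "encoder f"
begin

lemma sets_cell [measurable]: "cell f i \<in> sets borel"
proof -
  have "(\<lambda>u. f (saw u)) -` {i} \<inter> space (restrict_space borel {0..1::real})
          \<in> sets (restrict_space borel {0..1})"
    using encoder unfolding encoder_def by (rule measurable_sets) simp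
  moreover have "(\<lambda>u. f (saw u)) -` {i} \<inter> space (restrict_space borel {0..1::real}) = cell f i"
    unfolding cell_def by auto
  ultimately show ?thesis by (simp add: sets_restrict_space_iff)
qed

lemma unit_interval_set_cell: "unit_interval_set (cell f i)"
  using sets_cell cell_subset by unfold_locales

lemma cond_mean_eq: "cond_mean f i t = (t * cell_prob f i - cum_measure (cell f i) t) / cell_prob f i"
proof -
  interpret unit_interval_set "cell f i" by (rule unit_interval_set_cell)
  show ?thesis
    unfolding cond_mean_def cell_prob_eq_measure using set_integral_saw[of t]
    unfolding cell_def by simp
qed

lemma borel_measurable_cond_mean [measurable]: "cond_mean f i \<in> borel_measurable borel"
proof -
  interpret unit_interval_set "cell f i" by (rule unit_interval_set_cell)
  show ?thesis unfolding cond_mean_eq[abs_def] by measurable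
qed

lemma squared_deviation_le_one:
  assumes "t \<in> {0..1}"
  shows "(saw u t - cond_mean f i t)\<^sup>2 \<le> 1"
proof -
  interpret unit_interval_set "cell f i" by (rule unit_interval_set_cell)
  have "t - 1 \<le> cond_mean f i t \<and> cond_mean f i t \<le> t"
  proof (cases "cell_prob f i = 0")
    case False
    then have "0 < cell_prob f i" using measure_nonneg[of lborel "cell f i"]
      unfolding cell_prob_eq_measure by linarith
    then have "cond_mean f i t = t - cum_measure (cell f i) t / cell_prob f i"
      "0 \<le> cum_measure (cell f i) t / cell_prob f i" "cum_measure (cell f i) t / cell_prob f i \<le> 1"
      using cum_measure_nonneg[of t] cum_measure_le_measure[of t]
      unfolding cond_mean_eq cell_prob_eq_measure by (auto simp: field_simps)
    then show ?thesis by linarith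
  qed (use assms in \<open>simp add: cond_mean_eq\<close>)
  then have "\<bar>saw u t - cond_mean f i t\<bar> \<le> 1" using saw_bounds[where u=u and t=t] by linarith
  then show ?thesis by (simp add: abs_square_le_1)
qed

lemma set_integrable_squared_deviation:
  "set_integrable lborel {0..1} (\<lambda>t. (saw u t - cond_mean f i t)\<^sup>2)"
proof (rule set_integrable_bound[where f="\<lambda>_. 1::real"])
  show "set_integrable lborel {0..1::real} (\<lambda>_. 1::real)"
    by (intro borel_integrable_atLeastAtMost' continuous_intros)
  show "set_borel_measurable lborel {0..1} (\<lambda>t. (saw u t - cond_mean f i t)\<^sup>2)"
    unfolding set_borel_measurable_def by measurable
  show "AE t\<in>{0..1} in lborel. norm ((saw u t - cond_mean f i t)\<^sup>2) \<le> norm (1::real)"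
    using squared_deviation_le_one by (intro AE_I2) simp
qed

lemma path_distortion_nonneg: "0 \<le> path_distortion f i u"
  unfolding path_distortion_def set_lebesgue_integral_def
  by (intro Bochner_Integration.integral_nonneg) (auto simp: indicator_def)

lemma path_distortion_le_one: "path_distortion f i u \<le> 1"
proof -
  have "path_distortion f i u \<le> (LINT t:{0..1::real}|lborel. (1::real))"
    unfolding path_distortion_def using set_integrable_squared_deviation squared_deviation_le_one
    by (intro set_integral_mono) (auto intro: borel_integrable_atLeastAtMost' continuous_intros)
  then show ?thesis by (simp add: set_integral_const)
qed

lemma borel_measurable_path_distortion [measurable]: "path_distortion f i \<in> borel_measurable borel"
proof -
  have "(\<lambda>u. LBINT t. indicator {0..1} t *\<^sub>R (saw u t - cond_mean f i t)\<^sup>2) \<in> borel_measurable borel"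
    by (rule lborel.borel_measurable_lebesgue_integral) measurable
  then show ?thesis unfolding path_distortion_def[abs_def] set_lebesgue_integral_def .
qed

text \<open>The index \<open>f (saw u)\<close> is measurable only on \<open>[0,1]\<close>; extending it by \<open>0\<close>
  makes it a countable-valued Borel function.\<close>
lemma set_integrable_path_distortion:
  "set_integrable lborel {0..1} (\<lambda>u. path_distortion f (f (saw u)) u)"
proof (rule set_integrable_bound[where f="\<lambda>_. 1::real"])
  show "set_integrable lborel {0..1::real} (\<lambda>_. 1::real)"
    by (intro borel_integrable_atLeastAtMost' continuous_intros)
  define g where "g u = (if u \<in> {0..1} then f (saw u) else 0)" for u :: real
  have "(\<lambda>u. f (saw u)) \<in> restrict_space borel {0..1} \<rightarrow>\<^sub>M count_space UNIV"
    using encoder unfolding encoder_def .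
  then have "g \<in> borel \<rightarrow>\<^sub>M count_space UNIV"
    unfolding g_def by (subst (asm) measurable_restrict_space_iff) auto
  then have "(\<lambda>u. indicator {0..1} u * path_distortion f (g u) u) \<in> borel_measurable borel"
    by (intro measurable_compose_countable'[where I=UNIV and g=g
          and f="\<lambda>i u. indicator {0..1} u * path_distortion f i u"]) auto
  moreover have "(\<lambda>u. indicator {0..1} u * path_distortion f (g u) u)
                   = (\<lambda>u. indicator {0..1} u *\<^sub>R path_distortion f (f (saw u)) u)"
    by (auto simp: g_def indicator_def fun_eq_iff)
  ultimately show "set_borel_measurable lborel {0..1} (\<lambda>u. path_distortion f (f (saw u)) u)"
    unfolding set_borel_measurable_def by simp
  show "AE u\<in>{0..1} in lborel. norm (path_distortion f (f (saw u)) u) \<le> norm (1::real)"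
    using path_distortion_nonneg path_distortion_le_one by (intro AE_I2) simp
qed

lemma sum_cell_distortion:
  "(\<Sum>i<N. cell_distortion f i)
     = (LINT u:(\<Union>i<N. cell f i)|lborel. path_distortion f (f (saw u)) u)"
proof -
  have "cell_distortion f i = (LINT u:cell f i|lborel. path_distortion f (f (saw u)) u)" for i
    unfolding cell_distortion_def using sets_cell[of i]
    by (intro set_lebesgue_integral_cong) (auto simp: cell_def)
  moreover have "set_integrable lborel (cell f i) (\<lambda>u. path_distortion f (f (saw u)) u)" for i
    using set_integrable_path_distortion cell_subset sets_cell
    by (metis set_integrable_subset sets_lborel)
  ultimately show ?thesis
    using sets_cell by (simp, intro set_integral_finite_UN_AE[symmetric]) (auto simp: cell_def)
qed

lemma sum_cell_distortion_le_distortion: "(\<Sum>i<N. cell_distortion f i) \<le> distortion f"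
proof -
  let ?U = "\<Union>i<N. cell f i"
  have "?U \<in> sets borel" "?U \<subseteq> {0..1}" using cell_subset by auto
  have "{0..1} = ?U \<union> ({0..1} - ?U)" using \<open>?U \<subseteq> {0..1}\<close> by auto
  then have "distortion f = (LINT u:?U \<union> ({0..1} - ?U)|lborel. path_distortion f (f (saw u)) u)"
    unfolding distortion_eq_path_distortion by simp
  also have "\<dots> = (LINT u:?U|lborel. path_distortion f (f (saw u)) u)
                  + (LINT u:{0..1} - ?U|lborel. path_distortion f (f (saw u)) u)"
    using set_integrable_path_distortion \<open>?U \<in> sets borel\<close> \<open>?U \<subseteq> {0..1}\<close>
    by (intro set_integral_Un) (auto intro: set_integrable_subset)
  moreover have "0 \<le> (LINT u:{0..1} - ?U|lborel. path_distortion f (f (saw u)) u)"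
    unfolding set_lebesgue_integral_def using path_distortion_nonneg
    by (intro Bochner_Integration.integral_nonneg) (auto simp: indicator_def)
  ultimately show ?thesis unfolding sum_cell_distortion by linarith
qed

lemma sum_cell_distortion_eq_distortion:
  assumes "\<And>u. u \<in> {0..1} \<Longrightarrow> f (saw u) < N"
  shows "(\<Sum>i<N. cell_distortion f i) = distortion f"
proof -
  have "(\<Union>i<N. cell f i) = {0..1}" using assms by (auto simp: cell_def)
  then show ?thesis unfolding sum_cell_distortion distortion_eq_path_distortion by simp
qed

lemma cell_distortion_eq:
  assumes "0 < cell_prob f i"
  shows "cell_distortion f i
           = (LINT t:{0..1}|lborel. cum_measure (cell f i) t
                 * (cell_prob f i - cum_measure (cell f i) t)) / cell_prob f i"
proof -
  interpret unit_interval_set "cell f i" by (rule unit_interval_set_cell)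
  have mean: "cond_mean f i t = t - cum_measure (cell f i) t / measure lborel (cell f i)" for t
    using assms unfolding cond_mean_eq cell_prob_eq_measure by (simp add: field_simps)
  show ?thesis
    unfolding cell_distortion_def path_distortion_def mean
    using integral_squared_deviation assms unfolding cell_prob_eq_measure by simp
qed

lemma cell_distortion_ge: "(cell_prob f i)\<^sup>2 / 6 \<le> cell_distortion f i"
proof (cases "cell_prob f i = 0")
  case True
  have "0 \<le> cell_distortion f i"
    unfolding cell_distortion_def set_lebesgue_integral_def using path_distortion_nonneg
    by (intro Bochner_Integration.integral_nonneg) (auto simp: indicator_def)
  with True show ?thesis by simp
next
  case False
  interpret unit_interval_set "cell f i" by (rule unit_interval_set_cell)
  define p where "p = cell_prob f i"
  have "0 < p" using False measure_nonneg[of lborel "cell f i"]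
    unfolding p_def cell_prob_eq_measure by linarith
  have "0 \<le> (LINT t:{0..1} - cell f i|lborel. cum_measure (cell f i) t * (p - cum_measure (cell f i) t))"
    unfolding set_lebesgue_integral_def p_def cell_prob_eq_measure
    using cum_measure_nonneg cum_measure_le_measure
    by (intro Bochner_Integration.integral_nonneg) (simp add: indicator_def)
  then have "p^3 / 6 \<le> (LINT t:{0..1}|lborel. cum_measure (cell f i) t * (p - cum_measure (cell f i) t))"
    using integral_cum_measure_product unfolding p_def cell_prob_eq_measure by simp
  then have "(p^3 / 6) / p
      \<le> (LINT t:{0..1}|lborel. cum_measure (cell f i) t * (p - cum_measure (cell f i) t)) / p"
    using \<open>0 < p\<close> by (intro divide_right_mono) auto
  also have "\<dots> = cell_distortion f i"
    using cell_distortion_eq \<open>0 < p\<close> unfolding p_def by simp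
  finally show ?thesis using \<open>0 < p\<close> unfolding p_def by (simp add: power2_eq_square power3_eq_cube)
qed

lemma cell_prob_sums: "(\<lambda>i. cell_prob f i) sums 1"
proof -
  have "\<Union>(range (cell f)) = {0..1}" by (auto simp: cell_def)
  moreover have "(\<lambda>i. measure lborel (cell f i)) sums measure lborel (\<Union>(range (cell f)))"
  proof (rule measure_UNION)
    show "disjoint_family (cell f)" by (auto simp: disjoint_family_on_def cell_def)
    show "emeasure lborel (\<Union>(range (cell f))) \<noteq> \<infinity>"
      using \<open>\<Union>(range (cell f)) = {0..1}\<close> by simp
  qed auto
  ultimately show ?thesis unfolding cell_prob_eq_measure by simp
qed

lemma entropy_ge_distortion:
  assumes "distortion f \<le> \<Delta>"
  shows "ereal (- log 2 (6 * \<Delta>)) \<le> entropy f"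
proof -
  have "(\<Sum>i<n. (cell_prob f i)\<^sup>2) \<le> 6 * \<Delta>" for n
  proof -
    have "(\<Sum>i<n. (cell_prob f i)\<^sup>2 / 6) \<le> (\<Sum>i<n. cell_distortion f i)"
      by (intro sum_mono cell_distortion_ge)
    also have "\<dots> \<le> \<Delta>" using sum_cell_distortion_le_distortion assms by (rule order_trans)
    finally show ?thesis by (simp add: sum_divide_distrib[symmetric])
  qed
  then show ?thesis
    unfolding entropy_def
    by (intro entropy_ge_neg_log_sum_squares cell_prob_sums) (simp_all add: cell_prob_eq_measure)
qed

end

text \<open>A path is nonnegative exactly before its jump at \<open>U\<close>, so this counts the grid points
  \<open>k/n < U\<close>, i.e. it reports the \<open>j\<close> with \<open>U \<in> (j/n, (j+1)/n]\<close>.\<close>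
definition uniform_quantizer :: "nat \<Rightarrow> (real \<Rightarrow> real) \<Rightarrow> nat" where
  "uniform_quantizer n x = (\<Sum>k\<in>{1..<n}. if 0 \<le> x (real k / real n) then 1 else 0)"

lemma encoder_uniform_quantizer: "encoder (uniform_quantizer n)"
proof -
  have "(\<lambda>u. uniform_quantizer n (saw u)) \<in> borel \<rightarrow>\<^sub>M count_space UNIV"
    unfolding uniform_quantizer_def saw_def by measurable
  then show ?thesis unfolding encoder_def by (rule measurable_restrict_space1)
qed

lemma uniform_quantizer_saw:
  assumes "u \<le> 1"
  shows "uniform_quantizer n (saw u) = nat \<lceil>u * n\<rceil> - 1"
proof -
  have "0 \<le> saw u (real k / real n) \<longleftrightarrow> k < nat \<lceil>u * n\<rceil>" if "k \<in> {1..<n}" for k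
  proof -
    from that have "0 < real n" "0 < real k / real n" "real k / real n < 1"
      by (auto simp: field_simps)
    then have "0 \<le> saw u (real k / real n) \<longleftrightarrow> real k / real n < u"
      by (auto simp: saw_def)
    also have "\<dots> \<longleftrightarrow> real k < u * n" using \<open>0 < real n\<close> by (simp add: field_simps)
    also have "\<dots> \<longleftrightarrow> k < nat \<lceil>u * n\<rceil>" by (simp add: zless_nat_eq_int_zless less_ceiling_iff)
    finally show ?thesis .
  qed
  then have "uniform_quantizer n (saw u) = (\<Sum>k\<in>{1..<n}. if k < nat \<lceil>u * n\<rceil> then 1 else 0)"
    unfolding uniform_quantizer_def by (intro sum.cong) auto
  also have "\<dots> = card ({1..<n} \<inter> {k. k < nat \<lceil>u * n\<rceil>})"
    by (simp add: sum.If_cases)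
  also have "{1..<n} \<inter> {k. k < nat \<lceil>u * n\<rceil>} = {1..<nat \<lceil>u * n\<rceil>}"
  proof -
    have "u * n \<le> n" using mult_right_mono[OF assms, of "real n"] by simp
    then have "nat \<lceil>u * n\<rceil> \<le> n" by (simp add: ceiling_le_iff nat_le_iff)
    moreover have "m \<le> n \<Longrightarrow> {1..<n} \<inter> {k. k < m} = {1..<m}" for m by auto
    ultimately show ?thesis by blast
  qed
  finally show ?thesis by simp
qed

lemma cell_uniform_quantizer:
  assumes "j < n"
  shows "{real j / n <.. real (Suc j) / n} \<subseteq> cell (uniform_quantizer n) j"
    and "cell (uniform_quantizer n) j \<subseteq> {real j / n .. real (Suc j) / n}"
proof -
  have "0 < real n" using assms by simp
  show "{real j / n <.. real (Suc j) / n} \<subseteq> cell (uniform_quantizer n) j"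
  proof
    fix u assume u: "u \<in> {real j / n <.. real (Suc j) / n}"
    have "0 \<le> real j / n" "real (Suc j) / n \<le> 1" using assms by (simp_all add: field_simps)
    moreover from u have "real j / n < u" "u \<le> real (Suc j) / n" by auto
    ultimately have "u \<in> {0..1}" unfolding atLeastAtMost_iff by linarith
    from u \<open>0 < real n\<close> have "real j < u * n" "u * n \<le> real j + 1" by (auto simp: field_simps)
    then have "\<lceil>u * n\<rceil> = int j + 1" by (simp add: ceiling_eq_iff)
    with \<open>u \<in> {0..1}\<close> show "u \<in> cell (uniform_quantizer n) j"
      by (simp add: cell_def uniform_quantizer_saw nat_int_add)
  qed
  show "cell (uniform_quantizer n) j \<subseteq> {real j / n .. real (Suc j) / n}"
  proof
    fix u assume "u \<in> cell (uniform_quantizer n) j"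
    then have "0 \<le> u" "u \<le> 1" and j: "nat \<lceil>u * n\<rceil> - 1 = j"
      by (auto simp: cell_def uniform_quantizer_saw)
    then have "u * n \<le> real j + 1" by linarith
    moreover have "real j \<le> u * n"
      using \<open>0 \<le> u\<close> \<open>0 < real n\<close> j by (cases "j = 0") (auto, linarith)
    ultimately show "u \<in> {real j / n .. real (Suc j) / n}"
      using \<open>0 < real n\<close> by (simp add: field_simps)
  qed
qed

lemma uniform_quantizer_less:
  assumes "0 < n" "u \<in> {0..1}"
  shows "uniform_quantizer n (saw u) < n"
proof -
  have "u * n \<le> n" using mult_right_mono[of u 1 "real n"] assms by simp
  then have "nat \<lceil>u * n\<rceil> \<le> n" by (simp add: ceiling_le_iff nat_le_iff)
  with assms(1) have "nat \<lceil>u * n\<rceil> - 1 < n" by linarith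
  moreover have "uniform_quantizer n (saw u) = nat \<lceil>u * n\<rceil> - 1"
    using assms(2) by (simp add: uniform_quantizer_saw)
  ultimately show ?thesis by simp
qed

lemma cell_prob_uniform_quantizer:
  assumes "0 < n"
  shows "cell_prob (uniform_quantizer n) i = (if i < n then 1 / n else 0)"
proof (cases "i < n")
  case True
  interpret unit_interval_set "cell (uniform_quantizer n) i"
    using sawbridge_encoder.unit_interval_set_cell sawbridge_encoder.intro
      encoder_uniform_quantizer by blast
  have "real i / n \<le> real (Suc i) / n" by (simp add: divide_right_mono)
  with True show ?thesis
    unfolding cell_prob_eq_measure
    by (subst measure_eq_interval[OF _ cell_uniform_quantizer]) (auto simp: field_simps)
next
  case False
  with uniform_quantizer_less[OF assms] have "cell (uniform_quantizer n) i = {}"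
    by (fastforce simp: cell_def)
  with False show ?thesis by (simp add: cell_prob_eq_measure)
qed

lemma distortion_uniform_quantizer:
  assumes "0 < n"
  shows "distortion (uniform_quantizer n) = 1 / (6 * n)"
proof -
  interpret sawbridge_encoder "uniform_quantizer n" by (rule sawbridge_encoder.intro,
        rule encoder_uniform_quantizer)
  have "cell_distortion (uniform_quantizer n) j = 1 / (6 * (real n)\<^sup>2)" if "j < n" for j
  proof -
    interpret unit_interval_set "cell (uniform_quantizer n) j" by (rule unit_interval_set_cell)
    have "real j / n \<le> real (Suc j) / n" by (simp add: divide_right_mono)
    note interval = this cell_uniform_quantizer[OF that]
    have "real (Suc j) / n - real j / n = 1 / n" using assms by (simp add: field_simps)
    with that assms show ?thesis
      using cell_distortion_eq[of j] cell_prob_uniform_quantizer[OF assms, of j]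
        integral_cum_measure_product_interval[OF interval] measure_eq_interval[OF interval]
      by (simp add: cell_prob_eq_measure power2_eq_square power3_eq_cube field_simps)
  qed
  then have "(\<Sum>j<n. cell_distortion (uniform_quantizer n) j) = (\<Sum>j<n. 1 / (6 * (real n)\<^sup>2))"
    by (intro sum.cong) simp_all
  also have "\<dots> = 1 / (6 * n)" using assms by (simp add: power2_eq_square)
  finally show ?thesis
    using uniform_quantizer_less[OF assms] sum_cell_distortion_eq_distortion by simp
qed

lemma entropy_uniform_quantizer:
  assumes "0 < n"
  shows "entropy (uniform_quantizer n) = ereal (log 2 n)"
proof -
  have "entropy (uniform_quantizer n) = (\<Sum>i. ereal (if i < n then log 2 n / n else 0))"
    unfolding entropy_def cell_prob_uniform_quantizer[OF assms] using assms
    by (intro suminf_cong) (simp add: log_divide)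
  also have "\<dots> = (\<Sum>i<n. ereal (log 2 n / n))"
    by (subst suminf_finite[of "{..<n}"]) auto
  also have "\<dots> = ereal (log 2 n)" using assms by (simp add: sum_ereal)
  finally show ?thesis .
qed

lemma entropy_distortion_ge:
  assumes "0 < \<Delta>"
  shows "ereal (log 2 (1 / (6 * \<Delta>))) \<le> entropy_distortion \<Delta>"
  unfolding entropy_distortion_def
proof (rule INF_greatest)
  fix f assume "f \<in> {f. encoder f \<and> distortion f \<le> \<Delta>}"
  then interpret sawbridge_encoder f by (simp add: sawbridge_encoder_def)
  from \<open>f \<in> _\<close> have "ereal (- log 2 (6 * \<Delta>)) \<le> entropy f"
    by (intro entropy_ge_distortion) simp
  with assms show "ereal (log 2 (1 / (6 * \<Delta>))) \<le> entropy f" by (simp add: log_divide)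
qed

lemma entropy_distortion_le:
  assumes "0 < \<Delta>"
  shows "entropy_distortion \<Delta> \<le> ereal (log 2 (1 / (6 * \<Delta>) + 1))"
proof -
  define n where "n = nat \<lceil>1 / (6 * \<Delta>)\<rceil>"
  have "0 < 1 / (6 * \<Delta>)" using assms by simp
  then have n_ge: "1 / (6 * \<Delta>) \<le> n" and n_less: "n < 1 / (6 * \<Delta>) + 1"
    unfolding n_def by linarith+
  with \<open>0 < 1 / (6 * \<Delta>)\<close> have "0 < real n" by linarith
  then have "0 < n" by simp
  have "distortion (uniform_quantizer n) \<le> \<Delta>"
    using assms n_ge \<open>0 < n\<close> by (simp add: distortion_uniform_quantizer field_simps)
  then have "entropy_distortion \<Delta> \<le> entropy (uniform_quantizer n)"
    unfolding entropy_distortion_def using encoder_uniform_quantizer by (intro INF_lower) simp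
  also have "\<dots> \<le> ereal (log 2 (1 / (6 * \<Delta>) + 1))"
    using n_less \<open>0 < n\<close> by (simp add: entropy_uniform_quantizer)
  finally show ?thesis .
qed

lemma entropy_distortion_gap:
  assumes "0 < \<Delta>"
  shows "\<bar>entropy_distortion \<Delta> - ereal (log 2 (1 / (6 * \<Delta>)))\<bar> \<le> ereal (log 2 (1 + 6 * \<Delta>))"
proof -
  have "1 / (6 * \<Delta>) * (1 + 6 * \<Delta>) = 1 / (6 * \<Delta>) + 1" using assms by (simp add: field_simps)
  moreover have "log 2 (1 / (6 * \<Delta>) * (1 + 6 * \<Delta>)) = log 2 (1 / (6 * \<Delta>)) + log 2 (1 + 6 * \<Delta>)"
    using assms by (intro log_mult_pos) auto
  ultimately have "log 2 (1 / (6 * \<Delta>) + 1) = log 2 (1 / (6 * \<Delta>)) + log 2 (1 + 6 * \<Delta>)"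
    by (simp only:)
  with entropy_distortion_ge[OF assms] entropy_distortion_le[OF assms]
  obtain h where "entropy_distortion \<Delta> = ereal h"
    "log 2 (1 / (6 * \<Delta>)) \<le> h" "h \<le> log 2 (1 / (6 * \<Delta>)) + log 2 (1 + 6 * \<Delta>)"
    by (cases "entropy_distortion \<Delta>") auto
  then show ?thesis by simp
qed

theorem corollary2:
  shows "((\<lambda>\<Delta>. \<bar>entropy_distortion \<Delta> - ereal (log 2 (1 / (6 * \<Delta>)))\<bar>) \<longlongrightarrow> 0)
           (at_right (0::real))"
proof (rule tendsto_sandwich[of "\<lambda>_. 0" _ _ "\<lambda>\<Delta>. ereal (log 2 (1 + 6 * \<Delta>))"])
  show "\<forall>\<^sub>F \<Delta> in at_right 0. \<bar>entropy_distortion \<Delta> - ereal (log 2 (1 / (6 * \<Delta>)))\<bar>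
                                \<le> ereal (log 2 (1 + 6 * \<Delta>))"
    using entropy_distortion_gap eventually_at_right_less by (rule eventually_mono[rotated]) simp
  have "((\<lambda>\<Delta>::real. log 2 (1 + 6 * \<Delta>)) \<longlongrightarrow> log 2 (1 + 6 * 0)) (at_right 0)"
    by (intro tendsto_intros) auto
  then show "((\<lambda>\<Delta>. ereal (log 2 (1 + 6 * \<Delta>))) \<longlongrightarrow> 0) (at_right 0)"
    by (simp add: zero_ereal_def tendsto_ereal)
qed simp_all

end
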